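(* Let $\Delta=\{D_1,\dots,D_7\}$ and $\Sigma=\{\sigma_1,\dots,\sigma_5\}\subset\mathbb Z\Delta$ with $\sigma_1=D_1+D_2-D_3-D_7$, $\sigma_2=-D_1+D_2+D_3-D_4-D_6$, $\sigma_3=-D_2+D_3+D_4-D_5$, $\sigma_4=-D_3+D_4+D_5$, $\sigma_5=-D_5+D_6$. Then $D_4$ is minuscule in $\mathbb N\Delta$ (i.e. $E\in\mathbb N\Delta$, $E\le_\Sigma D_4$ implies $E=D_4$), and $$\Gamma_{D_4}=\langle D_1,\ D_2,\ D_4,\ D_3+D_7,\ D_5+D_7,\ D_6+D_7\rangle_{\mathbb N}.$$
   Context: For $D,E\in\mathbb Z\Delta$ write $D\le_\Sigma E$ if $E-D\in\mathbb N\Sigma$. For $D\in\mathbb N\Delta$, $\Gamma_D=\bigcup_{n\in\mathbb N}\{E\in\mathbb N\Delta: E\le_\Sigma nD\}$, a subsemigroup of $\mathbb N\Delta$; $\langle\cdot\rangle_{\mathbb N}$ denotes the generated submonoid. *)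

theory Defs
  imports Main "HOL-Library.Function_Algebras"
begin

text \<open>Elements of Z Delta (Delta = {D_1,...,D_7}) are represented as coefficient
functions nat => int supported on {1..7}; D i is the basis element D_i.\<close>

type_synonym divisor = "nat \<Rightarrow> int"

definition D :: "nat \<Rightarrow> divisor" where
  "D i = (\<lambda>j. if j = i then 1 else 0)"

definition ZDelta :: "divisor set" where
  "ZDelta = {x. \<forall>j. j \<notin> {1..7} \<longrightarrow> x j = 0}"

definition NDelta :: "divisor set" where
  "NDelta = {x \<in> ZDelta. \<forall>j. 0 \<le> x j}"

definition nat_span :: "divisor list \<Rightarrow> divisor set" where
  "nat_span gs = {x. \<exists>c::nat \<Rightarrow> nat. x = (\<lambda>j. \<Sum>i<length gs. int (c i) * (gs ! i) j)}"

definition Sigma_list :: "divisor list" where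
  "Sigma_list =
    [D 1 + D 2 - D 3 - D 7,
     - D 1 + D 2 + D 3 - D 4 - D 6,
     - D 2 + D 3 + D 4 - D 5,
     - D 3 + D 4 + D 5,
     - D 5 + D 6]"

definition le_Sigma :: "divisor \<Rightarrow> divisor \<Rightarrow> bool" where
  "le_Sigma X Y \<longleftrightarrow> Y - X \<in> nat_span Sigma_list"

definition Gamma :: "divisor \<Rightarrow> divisor set" where
  "Gamma X = (\<Union>n::nat. {E \<in> NDelta. le_Sigma E (\<lambda>j. int n * X j)})"

definition minuscule :: "divisor \<Rightarrow> bool" where
  "minuscule X \<longleftrightarrow> (\<forall>E \<in> NDelta. le_Sigma E X \<longrightarrow> E = X)"

end

theory Submission
  imports Defs
begin

text \<open>The linear form \<open>weight E = E\<^sub>3 + E\<^sub>5 + E\<^sub>6 - E\<^sub>7\<close> vanishes on every \<open>\<sigma>\<^sub>i\<close> and on \<open>D\<^sub>4\<close>,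
  so it vanishes on \<open>\<Gamma>\<^bsub>D\<^sub>4\<^esub>\<close>; an effective divisor of weight zero is visibly an
  \<open>\<nat>\<close>-combination of the six generators. Conversely each generator lies below some \<open>n D\<^sub>4\<close>,
  and \<open>\<Gamma>\<^bsub>D\<^sub>4\<^esub>\<close> is a submonoid. Minusculity: writing \<open>D\<^sub>4 - E = \<Sum> a\<^sub>i \<sigma>\<^sub>i\<close>, the
  nonnegativity of the coordinates of \<open>E\<close> forces all \<open>a\<^sub>i = 0\<close>.\<close>

lemma nat_span_Nil: "nat_span [] = {\<lambda>j. 0}"
  by (simp add: nat_span_def)

lemma nat_span_Cons:
  "x \<in> nat_span (g # gs) \<longleftrightarrow> (\<exists>a. (\<lambda>j. x j - int a * g j) \<in> nat_span gs)"
proof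
  assume "x \<in> nat_span (g # gs)"
  then obtain c where "x = (\<lambda>j. \<Sum>i<length (g # gs). int (c i) * ((g # gs) ! i) j)"
    by (auto simp: nat_span_def)
  then have "(\<lambda>j. x j - int (c 0) * g j) = (\<lambda>j. \<Sum>i<length gs. int (c (Suc i)) * (gs ! i) j)"
    by (simp del: sum.lessThan_Suc add: sum.lessThan_Suc_shift)
  then show "\<exists>a. (\<lambda>j. x j - int a * g j) \<in> nat_span gs"
    unfolding nat_span_def by (auto intro!: exI[of _ "c 0"] exI[of _ "\<lambda>i. c (Suc i)"])
next
  assume "\<exists>a. (\<lambda>j. x j - int a * g j) \<in> nat_span gs"
  then obtain a c where "(\<lambda>j. x j - int a * g j) = (\<lambda>j. \<Sum>i<length gs. int (c i) * (gs ! i) j)"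
    by (auto simp: nat_span_def)
  then have "x = (\<lambda>j. \<Sum>i<length (g # gs). int (case_nat a c i) * ((g # gs) ! i) j)"
    by (simp del: sum.lessThan_Suc add: sum.lessThan_Suc_shift fun_eq_iff algebra_simps)
  then show "x \<in> nat_span (g # gs)" unfolding nat_span_def by blast
qed

lemma zero_in_nat_span: "0 \<in> nat_span gs"
  unfolding nat_span_def by (auto intro!: exI[of _ "\<lambda>_. 0"])

lemma nat_span_add:
  assumes "x \<in> nat_span gs" and "y \<in> nat_span gs"
  shows "x + y \<in> nat_span gs"
proof -
  obtain c c' where "x = (\<lambda>j. \<Sum>i<length gs. int (c i) * (gs ! i) j)"
    and "y = (\<lambda>j. \<Sum>i<length gs. int (c' i) * (gs ! i) j)"
    using assms by (auto simp: nat_span_def)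
  then have "x + y = (\<lambda>j. \<Sum>i<length gs. int (c i + c' i) * (gs ! i) j)"
    by (simp add: fun_eq_iff sum.distrib distrib_right)
  then show ?thesis unfolding nat_span_def by (auto intro!: exI[of _ "\<lambda>i. c i + c' i"])
qed

lemma nat_span_subset:
  assumes "0 \<in> M" and "\<And>x y. x \<in> M \<Longrightarrow> y \<in> M \<Longrightarrow> x + y \<in> M" and "set gs \<subseteq> M"
  shows "nat_span gs \<subseteq> M"
  using assms(3)
proof (induction gs)
  case Nil
  then show ?case using assms(1) by (auto simp: nat_span_Nil zero_fun_def)
next
  case (Cons g gs)
  have multiple: "(\<lambda>j. int a * g j) \<in> M" for a
  proof (induction a)
    case 0
    then show ?case using assms(1) by (simp add: zero_fun_def)
  next
    case (Suc a)
    have "(\<lambda>j. int (Suc a) * g j) = (\<lambda>j. int a * g j) + g"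
      by (simp add: fun_eq_iff algebra_simps)
    then show ?case using Suc Cons.prems assms(2) by simp
  qed
  show ?case
  proof
    fix x assume "x \<in> nat_span (g # gs)"
    then obtain a where residual: "(\<lambda>j. x j - int a * g j) \<in> M"
      using Cons by (auto simp: nat_span_Cons)
    have "x = (\<lambda>j. x j - int a * g j) + (\<lambda>j. int a * g j)"
      by (simp add: fun_eq_iff)
    also have "\<dots> \<in> M"
      using residual multiple by (rule assms(2))
    finally show "x \<in> M" .
  qed
qed

lemma all_nat_split_0_7:
  "(\<forall>j::nat. P j) \<longleftrightarrow> P 0 \<and> P 1 \<and> P 2 \<and> P 3 \<and> P 4 \<and> P 5 \<and> P 6 \<and> P 7 \<and> (\<forall>j>7. P j)"
proof -
  have "j \<le> 7 \<Longrightarrow> j = 0 \<or> j = 1 \<or> j = 2 \<or> j = 3 \<or> j = 4 \<or> j = 5 \<or> j = 6 \<or> j = 7" for j :: nat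
    by presburger
  then show ?thesis by (metis not_le)
qed

lemma NDelta_iff: "E \<in> NDelta \<longleftrightarrow> (\<forall>j. 0 \<le> E j) \<and> E 0 = 0 \<and> (\<forall>j>7. E j = 0)"
  by (auto simp: NDelta_def ZDelta_def not_less_eq_eq)

lemma NDelta_add: "E \<in> NDelta \<Longrightarrow> E' \<in> NDelta \<Longrightarrow> E + E' \<in> NDelta"
  by (simp add: NDelta_def ZDelta_def)

lemma le_Sigma_iff:
  "le_Sigma E Y \<longleftrightarrow> (\<exists>a1 a2 a3 a4 a5::nat.
     Y 1 - E 1 = int a1 - int a2 \<and>
     Y 2 - E 2 = int a1 + int a2 - int a3 \<and>
     Y 3 - E 3 = - int a1 + int a2 + int a3 - int a4 \<and>
     Y 4 - E 4 = - int a2 + int a3 + int a4 \<and>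
     Y 5 - E 5 = - int a3 + int a4 - int a5 \<and>
     Y 6 - E 6 = - int a2 + int a5 \<and>
     Y 7 - E 7 = - int a1 \<and>
     Y 0 = E 0 \<and> (\<forall>j>7. Y j = E j))"
  unfolding le_Sigma_def Sigma_list_def nat_span_Cons nat_span_Nil
  by (simp add: fun_eq_iff D_def, subst all_nat_split_0_7, simp add: algebra_simps, blast)

lemma le_SigmaI:
  assumes "Y 1 - E 1 = int a1 - int a2"
    and "Y 2 - E 2 = int a1 + int a2 - int a3"
    and "Y 3 - E 3 = - int a1 + int a2 + int a3 - int a4"
    and "Y 4 - E 4 = - int a2 + int a3 + int a4"
    and "Y 5 - E 5 = - int a3 + int a4 - int a5"
    and "Y 6 - E 6 = - int a2 + int a5"
    and "Y 7 - E 7 = - int a1"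
    and "Y 0 = E 0" and "\<forall>j>7. Y j = E j"
  shows "le_Sigma E Y"
  unfolding le_Sigma_iff using assms by blast

lemma le_Sigma_add:
  assumes "le_Sigma E Y" and "le_Sigma E' Y'"
  shows "le_Sigma (E + E') (Y + Y')"
proof -
  have "(Y + Y') - (E + E') = (Y - E) + (Y' - E')"
    by (simp add: algebra_simps)
  then show ?thesis
    using assms nat_span_add unfolding le_Sigma_def by metis
qed

lemma zero_in_Gamma: "0 \<in> Gamma X"
proof -
  have "0 \<in> NDelta" by (simp add: NDelta_def ZDelta_def)
  moreover have "le_Sigma 0 (\<lambda>j. int 0 * X j)"
    by (simp add: le_Sigma_def zero_in_nat_span flip: zero_fun_def)
  ultimately show ?thesis unfolding Gamma_def by blast
qed

lemma Gamma_add: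
  assumes "E \<in> Gamma X" and "E' \<in> Gamma X"
  shows "E + E' \<in> Gamma X"
proof -
  obtain n n' :: nat where "E \<in> NDelta" "le_Sigma E (\<lambda>j. int n * X j)"
    and "E' \<in> NDelta" "le_Sigma E' (\<lambda>j. int n' * X j)"
    using assms by (auto simp: Gamma_def)
  then have "E + E' \<in> NDelta" "le_Sigma (E + E') ((\<lambda>j. int n * X j) + (\<lambda>j. int n' * X j))"
    by (simp_all add: NDelta_add le_Sigma_add)
  moreover have "(\<lambda>j. int n * X j) + (\<lambda>j. int n' * X j) = (\<lambda>j. int (n + n') * X j)"
    by (simp add: fun_eq_iff algebra_simps)
  ultimately have "E + E' \<in> {F \<in> NDelta. le_Sigma F (\<lambda>j. int (n + n') * X j)}"
    by simp
  then show ?thesis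
    unfolding Gamma_def by blast
qed

lemma minuscule_D4: "minuscule (D 4)"
  unfolding minuscule_def
proof (intro ballI impI)
  fix E assume "E \<in> NDelta" and "le_Sigma E (D 4)"
  from \<open>le_Sigma E (D 4)\<close> obtain a1 a2 a3 a4 a5 :: nat where
    c1: "D 4 1 - E 1 = int a1 - int a2" and
    c2: "D 4 2 - E 2 = int a1 + int a2 - int a3" and
    c3: "D 4 3 - E 3 = - int a1 + int a2 + int a3 - int a4" and
    c4: "D 4 4 - E 4 = - int a2 + int a3 + int a4" and
    c5: "D 4 5 - E 5 = - int a3 + int a4 - int a5" and
    c6: "D 4 6 - E 6 = - int a2 + int a5" and
    c7: "D 4 7 - E 7 = - int a1" and
    outside: "D 4 0 = E 0" "\<forall>j>7. D 4 j = E j"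
    unfolding le_Sigma_iff by blast
  have D4: "D 4 1 = 0" "D 4 2 = 0" "D 4 3 = 0" "D 4 4 = 1" "D 4 5 = 0" "D 4 6 = 0" "D 4 7 = 0"
    by (simp_all add: D_def)
  have nonneg: "0 \<le> E j" for j
    using \<open>E \<in> NDelta\<close> by (simp add: NDelta_iff)
  have "a1 = 0" "a2 = 0" "a3 = 0"
    using nonneg[of 1] nonneg[of 2] nonneg[of 3] nonneg[of 4] c1 c2 c3 c4 D4 by linarith+
  moreover from this have "a4 = 0" "a5 = 0"
    using nonneg[of 4] nonneg[of 5] nonneg[of 6] c4 c5 c6 D4 by linarith+
  ultimately show "E = D 4"
    using c1 c2 c3 c4 c5 c6 c7 outside D4
    by (simp add: fun_eq_iff, subst all_nat_split_0_7, simp)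
qed

definition weight :: "divisor \<Rightarrow> int" where
  "weight E = E 3 + E 5 + E 6 - E 7"

lemma le_Sigma_weight: "le_Sigma E Y \<Longrightarrow> weight E = weight Y"
  by (auto simp: le_Sigma_iff weight_def)

lemma weight_Gamma_D4: "E \<in> Gamma (D 4) \<Longrightarrow> weight E = 0"
  by (auto simp: Gamma_def dest!: le_Sigma_weight) (simp add: weight_def D_def)

lemma NDelta_weight_zero_in_nat_span:
  assumes "E \<in> NDelta" and "weight E = 0"
  shows "E \<in> nat_span [D 1, D 2, D 4, D 3 + D 7, D 5 + D 7, D 6 + D 7]"
proof -
  have nonneg: "\<forall>j. 0 \<le> E j" and outside: "E 0 = 0" "\<forall>j>7. E j = 0"
    using assms(1) by (simp_all add: NDelta_iff)
  have balance: "E 7 = E 3 + E 5 + E 6"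
    using assms(2) by (simp add: weight_def)
  show ?thesis
    unfolding nat_span_Cons nat_span_Nil
    by (rule exI[of _ "nat (E 1)"], rule exI[of _ "nat (E 2)"], rule exI[of _ "nat (E 4)"],
        rule exI[of _ "nat (E 3)"], rule exI[of _ "nat (E 5)"], rule exI[of _ "nat (E 6)"])
      (use nonneg outside balance in \<open>simp add: fun_eq_iff D_def, subst all_nat_split_0_7, simp\<close>)
qed

lemma generators_in_Gamma_D4:
  "set [D 1, D 2, D 4, D 3 + D 7, D 5 + D 7, D 6 + D 7] \<subseteq> Gamma (D 4)"
proof -
  have in_Gamma: "E \<in> Gamma (D 4)" if "E \<in> NDelta" and "le_Sigma E (\<lambda>j. int n * D 4 j)" for E n
    using that unfolding Gamma_def by blast
  \<comment> \<open>the arguments of \<open>le_SigmaI\<close> are the coefficients of \<open>\<sigma>\<^sub>1, \<dots>, \<sigma>\<^sub>5\<close> in \<open>n D\<^sub>4 - E\<close>\<close>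
  have "D 1 \<in> Gamma (D 4)"
    by (rule in_Gamma[where n = 2], simp add: NDelta_iff D_def,
        rule le_SigmaI[of _ _ 0 1 1 2 1]) (simp_all add: D_def)
  moreover have "D 2 \<in> Gamma (D 4)"
    by (rule in_Gamma[where n = 2], simp add: NDelta_iff D_def,
        rule le_SigmaI[of _ _ 0 0 1 1 0]) (simp_all add: D_def)
  moreover have "D 4 \<in> Gamma (D 4)"
    by (rule in_Gamma[where n = 1], simp add: NDelta_iff D_def,
        rule le_SigmaI[of _ _ 0 0 0 0 0]) (simp_all add: D_def)
  moreover have "D 3 + D 7 \<in> Gamma (D 4)"
    by (rule in_Gamma[where n = 4], simp add: NDelta_iff D_def,
        rule le_SigmaI[of _ _ 1 1 2 3 1]) (simp_all add: D_def)
  moreover have "D 5 + D 7 \<in> Gamma (D 4)"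
    by (rule in_Gamma[where n = 3], simp add: NDelta_iff D_def,
        rule le_SigmaI[of _ _ 1 1 2 2 1]) (simp_all add: D_def)
  moreover have "D 6 + D 7 \<in> Gamma (D 4)"
    by (rule in_Gamma[where n = 3], simp add: NDelta_iff D_def,
        rule le_SigmaI[of _ _ 1 1 2 2 0]) (simp_all add: D_def)
  ultimately show ?thesis by simp
qed

theorem mainTheorem15:
  shows "minuscule (D 4) \<and>
    Gamma (D 4) = nat_span [D 1, D 2, D 4, D 3 + D 7, D 5 + D 7, D 6 + D 7]"
proof (intro conjI equalityI subsetI)
  show "minuscule (D 4)" by (rule minuscule_D4)
next
  fix E assume "E \<in> Gamma (D 4)"
  then have "E \<in> NDelta" and "weight E = 0"
    by (auto simp: Gamma_def weight_Gamma_D4)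
  then show "E \<in> nat_span [D 1, D 2, D 4, D 3 + D 7, D 5 + D 7, D 6 + D 7]"
    by (rule NDelta_weight_zero_in_nat_span)
next
  fix E assume "E \<in> nat_span [D 1, D 2, D 4, D 3 + D 7, D 5 + D 7, D 6 + D 7]"
  then show "E \<in> Gamma (D 4)"
    using nat_span_subset[OF zero_in_Gamma Gamma_add generators_in_Gamma_D4] by blast
qed

end
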